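(* Let $X=X_\sigma$ be the root monoid associated with a cone $\sigma$, a $k$-dimensional regular face $\tau$ with primitive ray generators $p_1,\ldots,p_k$, and a compatible set of Demazure roots $\{e_1^{(r)},e_2^{(r)}\}_{r=1}^k$, and assume the vectors $e_2^{(1)}-e_1^{(1)},\ldots,e_2^{(k)}-e_1^{(k)}$ are linearly independent (i.e. the group of invertible elements is active). Then the center $Z(X)=\{x\in X: x*y=y*x\ \forall y\in X\}$ equals $$Z(X)=\overline{O_\tau}\cap\{x\in X:\chi^{u+e_1^{(r)}}(x)=\chi^{u+e_2^{(r)}}(x)\ \text{for all }(r,u)\in I\},$$ where $I=\{(r,u): r\in\{1,\ldots,k\},\ u\in S_\sigma,\ \langle p_j,u\rangle=\delta_{jr}\ \text{for all } j=1,\ldots,k\}$.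
   Context: $\mathbb{K}$ algebraically closed of characteristic zero; $N$ lattice, $M$ dual, $S_\sigma=\sigma^\vee\cap M$, $X_\sigma=\operatorname{Spec}\bigoplus_{u\in S_\sigma}\mathbb{K}\chi^u$. $O_\tau$ is the torus orbit consisting of points $x$ with $\chi^u(x)\ne0$ iff $u\in\tau^\perp$; its closure $\overline{O_\tau}$ is the set of $x$ with $\chi^u(x)=0$ for all $u\in S_\sigma\setminus\tau^\perp$. Regular face: primitive ray generators extend to a basis of $N$. Demazure root for ray generator $p_i$ of $\sigma$: $e\in M$, $\langle p_i,e\rangle=-1$, $\langle p_j,e\rangle\ge0$ for the other ray generators. Compatibility: $\langle p_s,e_1^{(r)}\rangle=\langle p_s,e_2^{(r)}\rangle=-\delta_{rs}$. The root monoid is $X_\sigma$ with multiplication $\chi^u(x*y)=\sum_{\bar i+\bar j=\langle\bar p,u\rangle}\prod_r\binom{\langle p_r,u\rangle}{i_r}\chi^{u+\sum_ri_re_2^{(r)}}(x)\chi^{u+\sum_rj_re_1^{(r)}}(y)$, with $\langle\bar p,u\rangle=(\langle p_1,u\rangle,\ldots,\langle p_k,u\rangle)$ (dual to the comultiplication $\chi^u\mapsto\chi^u\otimes\chi^u\prod_r(1\otimes\chi^{e_1^{(r)}}+\chi^{e_2^{(r)}}\otimes1)^{\langle p_r,u\rangle}$). *)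

theory Defs
  imports "HOL-Analysis.Analysis" "HOL-Computational_Algebra.Polynomial"
begin

text \<open>Lattice N = M = Z^n (n = CARD('n)), with the standard pairing.\<close>

definition alg_closed :: "'k::field itself \<Rightarrow> bool" where
  "alg_closed _ = (\<forall>q :: 'k poly. degree q > 0 \<longrightarrow> (\<exists>z. poly q z = 0))"

definition pair :: "int^'n \<Rightarrow> int^'n \<Rightarrow> int" where
  "pair v u = (\<Sum>i\<in>UNIV. v$i * u$i)"

definition primitive :: "int^'n \<Rightarrow> bool" where
  "primitive v = (v \<noteq> 0 \<and> (\<forall>(c::int) w. v = c *s w \<longrightarrow> c > 0 \<longrightarrow> c = 1))"

text \<open>R is the set of primitive ray generators of a strongly convex rational
  polyhedral cone sigma = cone(R): finite, primitive, strongly convex, and each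
  element of R spans a ray (one-dimensional face) of cone(R).\<close>
definition ray_generators :: "(int^'n) set \<Rightarrow> bool" where
  "ray_generators R = (finite R \<and> (\<forall>v\<in>R. primitive v)
     \<and> (\<exists>m. \<forall>v\<in>R. pair v m > 0)
     \<and> (\<forall>v\<in>R. \<exists>m. pair v m = 0 \<and> (\<forall>w\<in>R - {v}. pair w m > 0)))"

definition S_mon :: "(int^'n) set \<Rightarrow> (int^'n) set" where
  "S_mon R = {u. \<forall>v\<in>R. pair v u \<ge> 0}"

text \<open>tau = cone(p 0, ..., p (k-1)) is a k-dimensional regular face of sigma:
  the p i are distinct rays of sigma, tau = sigma \<inter> m^perp for some m in sigma^dual,
  and p 0..p (k-1) extend to a Z-basis of N.\<close>
definition regular_face :: "(int^'n) set \<Rightarrow> nat \<Rightarrow> (nat \<Rightarrow> int^'n) \<Rightarrow> bool" where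
  "regular_face R k p = ((\<forall>i<k. p i \<in> R) \<and> inj_on p {..<k}
     \<and> (\<exists>m. (\<forall>i<k. pair (p i) m = 0) \<and> (\<forall>w\<in>R - p ` {..<k}. pair w m > 0))
     \<and> (\<exists>q :: nat \<Rightarrow> int^'n. (\<forall>i<k. q i = p i)
          \<and> (\<forall>v. \<exists>c :: nat \<Rightarrow> int. v = (\<Sum>i<CARD('n). c i *s q i))
          \<and> (\<forall>c :: nat \<Rightarrow> int. (\<Sum>i<CARD('n). c i *s q i) = 0 \<longrightarrow> (\<forall>i<CARD('n). c i = 0))))"

definition demazure_root :: "(int^'n) set \<Rightarrow> int^'n \<Rightarrow> int^'n \<Rightarrow> bool" where
  "demazure_root R v e = (pair v e = -1 \<and> (\<forall>w\<in>R - {v}. pair w e \<ge> 0))"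

definition compatible_roots ::
  "(int^'n) set \<Rightarrow> nat \<Rightarrow> (nat \<Rightarrow> int^'n) \<Rightarrow> (nat \<Rightarrow> int^'n) \<Rightarrow> (nat \<Rightarrow> int^'n) \<Rightarrow> bool" where
  "compatible_roots R k p e1 e2 = (\<forall>r<k. demazure_root R (p r) (e1 r) \<and> demazure_root R (p r) (e2 r)
     \<and> (\<forall>s<k. pair (p s) (e1 r) = (if r = s then -1 else 0) \<and> pair (p s) (e2 r) = (if r = s then -1 else 0)))"

text \<open>Closed points of X_sigma = Spec K[S_sigma]: monoid homomorphisms
  (S_sigma,+) \<rightarrow> (K,*), x u = chi^u(x); normalised to 0 outside S_sigma.\<close>
definition points :: "(int^'n) set \<Rightarrow> ((int^'n) \<Rightarrow> 'k::field) set" where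
  "points R = {x. (\<forall>u. u \<notin> S_mon R \<longrightarrow> x u = 0) \<and> x 0 = 1
     \<and> (\<forall>u\<in>S_mon R. \<forall>v\<in>S_mon R. x (u + v) = x u * x v)}"

definition rmult :: "(int^'n) set \<Rightarrow> nat \<Rightarrow> (nat \<Rightarrow> int^'n) \<Rightarrow> (nat \<Rightarrow> int^'n) \<Rightarrow> (nat \<Rightarrow> int^'n)
    \<Rightarrow> ((int^'n) \<Rightarrow> 'k::field) \<Rightarrow> ((int^'n) \<Rightarrow> 'k) \<Rightarrow> ((int^'n) \<Rightarrow> 'k)" where
  "rmult R k p e1 e2 x y = (\<lambda>u. if u \<in> S_mon R then
     (\<Sum>i\<in>PiE {..<k} (\<lambda>r. {..nat (pair (p r) u)}).
        (\<Prod>r<k. of_nat (nat (pair (p r) u) choose i r))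
        * x (u + (\<Sum>r<k. int (i r) *s e2 r))
        * y (u + (\<Sum>r<k. int (nat (pair (p r) u) - i r) *s e1 r)))
     else 0)"

definition center :: "(int^'n) set \<Rightarrow> nat \<Rightarrow> (nat \<Rightarrow> int^'n) \<Rightarrow> (nat \<Rightarrow> int^'n) \<Rightarrow> (nat \<Rightarrow> int^'n)
    \<Rightarrow> ((int^'n) \<Rightarrow> 'k::field) set" where
  "center R k p e1 e2 = {x \<in> points R. \<forall>y \<in> points R. rmult R k p e1 e2 x y = rmult R k p e1 e2 y x}"

text \<open>Closure of the orbit O_tau: chi^u vanishes for u in S_sigma \ tau^perp.\<close>
definition orbit_closure :: "(int^'n) set \<Rightarrow> nat \<Rightarrow> (nat \<Rightarrow> int^'n) \<Rightarrow> ((int^'n) \<Rightarrow> 'k::field) set" where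
  "orbit_closure R k p = {x \<in> points R. \<forall>u \<in> S_mon R. (\<exists>j<k. pair (p j) u \<noteq> 0) \<longrightarrow> x u = 0}"

definition index_set :: "(int^'n) set \<Rightarrow> nat \<Rightarrow> (nat \<Rightarrow> int^'n) \<Rightarrow> (nat \<times> (int^'n)) set" where
  "index_set R k p = {(r, u). r < k \<and> u \<in> S_mon R \<and> (\<forall>j<k. pair (p j) u = (if j = r then 1 else 0))}"

end

theory Submission
  imports Defs
begin

(* If x lies in the closure of O_tau, every character chi^v with some <p_r, v> ~= 0 vanishes
   at x, so a single term of the product formula survives: with a_r = <p_r, u>,
     chi^u (x * y) = chi^(u + sum_r a_r e2_r) (x) * chi^u (y),
     chi^u (y * x) = chi^u (y) * chi^(u + sum_r a_r e1_r) (x).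
   Such an x is therefore central iff these two characters agree at x, and moving the roots
   from e1 to e2 one at a time, each move being one of the conditions indexed by I, shows
   that this is exactly the condition of the theorem.
   Conversely, a central x lies in the orbit closure: if a ~= 0, the two characters above
   differ by linear independence of the e2_r - e1_r, some point y of O_tau separates them,
   and commuting with y forces chi^u (x) = 0. *)

lemma pair_add_right: "pair v (a + b) = pair v a + pair v b"
  by (simp add: pair_def algebra_simps sum.distrib)

lemma pair_smult_right: "pair v (c *s a) = c * pair v a"
  by (simp add: pair_def sum_distrib_left algebra_simps)

lemma pair_zero_right [simp]: "pair v 0 = 0"
  by (simp add: pair_def)

lemma pair_sum_right: "pair v (sum f A) = (\<Sum>s\<in>A. pair v (f s))"
  unfolding pair_def by (simp add: sum_distrib_left sum.swap[of _ UNIV])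

lemma pair_sum_dual:
  fixes k :: nat
  assumes "\<forall>r<k. pair q (e r) = (if r = j then -1 else 0)" and "j < k"
  shows "pair q (\<Sum>r<k. c r *s e r) = - c j"
proof -
  have "pair q (\<Sum>r<k. c r *s e r) = (\<Sum>r<k. c r * pair q (e r))"
    by (simp add: pair_sum_right pair_smult_right)
  also have "\<dots> = (\<Sum>r<k. if r = j then - c r else 0)"
    using assms(1) by (intro sum.cong) auto
  finally show ?thesis
    using assms(2) by simp
qed

lemma compatible_roots_pair_sum:
  assumes "compatible_roots R k p e1 e2" and "j < k"
  shows "pair (p j) (\<Sum>r<k. c r *s e1 r) = - c j"
    and "pair (p j) (\<Sum>r<k. c r *s e2 r) = - c j"
  using assms by (auto simp: compatible_roots_def intro!: pair_sum_dual)

lemma S_mon_pair_nonneg: "u \<in> S_mon R \<Longrightarrow> w \<in> R \<Longrightarrow> 0 \<le> pair w u"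
  by (simp add: S_mon_def)

lemma zero_in_S_mon: "0 \<in> S_mon R"
  by (simp add: S_mon_def)

lemma add_in_S_mon: "u \<in> S_mon R \<Longrightarrow> v \<in> S_mon R \<Longrightarrow> u + v \<in> S_mon R"
  by (simp add: S_mon_def pair_add_right)

lemma root_shift_in_S_mon:
  assumes C: "compatible_roots R k p e1 e2" and P: "\<forall>r<k. p r \<in> R" and u: "u \<in> S_mon R"
    and cd: "\<forall>r<k. 0 \<le> c r \<and> 0 \<le> d r \<and> c r + d r \<le> pair (p r) u"
  shows "u + (\<Sum>r<k. c r *s e1 r) + (\<Sum>r<k. d r *s e2 r) \<in> S_mon R"
  unfolding S_mon_def
proof (intro CollectI ballI)
  fix w assume w: "w \<in> R"
  let ?v = "u + (\<Sum>r<k. c r *s e1 r) + (\<Sum>r<k. d r *s e2 r)"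
  show "0 \<le> pair w ?v"
  proof (cases "w \<in> p ` {..<k}")
    case True
    then obtain j where "j < k" "w = p j" by auto
    then show ?thesis
      using cd[rule_format, of j] compatible_roots_pair_sum[OF C] by (simp add: pair_add_right)
  next
    case False
    have "0 \<le> pair w (e1 r) \<and> 0 \<le> pair w (e2 r)" if "r < k" for r
    proof -
      have "w \<noteq> p r"
        using False that by blast
      then show ?thesis
        using C w that by (auto simp: compatible_roots_def demazure_root_def)
    qed
    then have "0 \<le> pair w (\<Sum>r<k. c r *s e1 r) \<and> 0 \<le> pair w (\<Sum>r<k. d r *s e2 r)"
      using cd by (auto simp: pair_sum_right pair_smult_right intro!: sum_nonneg)
    then show ?thesis
      using S_mon_pair_nonneg[OF u w] by (simp add: pair_add_right)
  qed
qed

lemma orbit_closure_vanishes: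
  assumes "x \<in> orbit_closure R k p" and "j < k" and "pair (p j) v \<noteq> 0"
  shows "x v = 0"
  using assms by (cases "v \<in> S_mon R") (auto simp: orbit_closure_def points_def)

lemma sum_PiE_single:
  assumes "finite I" and "\<forall>i\<in>I. finite (B i)" and "g \<in> PiE I B"
    and "\<And>h. h \<in> PiE I B \<Longrightarrow> \<exists>i\<in>I. h i \<noteq> g i \<Longrightarrow> f h = 0"
  shows "sum f (PiE I B) = f g"
proof -
  have "h \<in> PiE I B \<Longrightarrow> h \<noteq> g \<Longrightarrow> \<exists>i\<in>I. h i \<noteq> g i" for h
    using assms(3) PiE_ext by blast
  then have "sum f (PiE I B) = sum f {g}"
    using assms by (intro sum.mono_neutral_right) (auto simp: finite_PiE)
  then show ?thesis
    by simp
qed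

lemma rmult_orbit_closure_left:
  assumes C: "compatible_roots R k p e1 e2" and P: "\<forall>r<k. p r \<in> R"
    and u: "u \<in> S_mon R" and x: "x \<in> orbit_closure R k p"
  shows "rmult R k p e1 e2 x y u = x (u + (\<Sum>r<k. pair (p r) u *s e2 r)) * y u"
proof -
  define a where "a r = nat (pair (p r) u)" for r
  have a: "int (a r) = pair (p r) u" if "r < k" for r
    using S_mon_pair_nonneg[OF u] P that by (simp add: a_def)
  have "rmult R k p e1 e2 x y u
      = (\<Sum>i\<in>PiE {..<k} (\<lambda>r. {..a r}). (\<Prod>r<k. of_nat (a r choose i r))
          * x (u + (\<Sum>r<k. int (i r) *s e2 r)) * y (u + (\<Sum>r<k. int (a r - i r) *s e1 r)))"
    using u by (simp add: rmult_def a_def)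
  also have "\<dots> = x (u + (\<Sum>r<k. int (a r) *s e2 r)) * y u"
  proof (subst sum_PiE_single[where g = "restrict a {..<k}"])
    fix i assume "i \<in> PiE {..<k} (\<lambda>r. {..a r})" and "\<exists>r\<in>{..<k}. i r \<noteq> restrict a {..<k} r"
    then obtain r where r: "r < k" "i r < a r"
      by (fastforce simp: PiE_def Pi_def)
    then have "int (i r) < pair (p r) u"
      using a by force
    then have "pair (p r) (u + (\<Sum>s<k. int (i s) *s e2 s)) \<noteq> 0"
      using compatible_roots_pair_sum(2)[OF C r(1)] by (simp add: pair_add_right)
    then show "(\<Prod>r<k. of_nat (a r choose i r)) * x (u + (\<Sum>r<k. int (i r) *s e2 r))
        * y (u + (\<Sum>r<k. int (a r - i r) *s e1 r)) = 0"
      using orbit_closure_vanishes[OF x r(1)] by simp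
  qed simp_all
  also have "(\<Sum>r<k. int (a r) *s e2 r) = (\<Sum>r<k. pair (p r) u *s e2 r)"
    using a by (intro sum.cong) auto
  finally show ?thesis .
qed

lemma rmult_orbit_closure_right:
  assumes C: "compatible_roots R k p e1 e2" and P: "\<forall>r<k. p r \<in> R"
    and u: "u \<in> S_mon R" and x: "x \<in> orbit_closure R k p"
  shows "rmult R k p e1 e2 y x u = y u * x (u + (\<Sum>r<k. pair (p r) u *s e1 r))"
proof -
  define a where "a r = nat (pair (p r) u)" for r
  have a: "int (a r) = pair (p r) u" if "r < k" for r
    using S_mon_pair_nonneg[OF u] P that by (simp add: a_def)
  have "rmult R k p e1 e2 y x u
      = (\<Sum>i\<in>PiE {..<k} (\<lambda>r. {..a r}). (\<Prod>r<k. of_nat (a r choose i r))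
          * y (u + (\<Sum>r<k. int (i r) *s e2 r)) * x (u + (\<Sum>r<k. int (a r - i r) *s e1 r)))"
    using u by (simp add: rmult_def a_def)
  also have "\<dots> = y u * x (u + (\<Sum>r<k. int (a r) *s e1 r))"
  proof (subst sum_PiE_single[where g = "restrict (\<lambda>_. 0) {..<k}"])
    fix i assume "i \<in> PiE {..<k} (\<lambda>r. {..a r})" and "\<exists>r\<in>{..<k}. i r \<noteq> restrict (\<lambda>_. 0) {..<k} r"
    then obtain r where r: "r < k" "0 < i r" "i r \<le> a r"
      by (fastforce simp: PiE_def Pi_def)
    then have "pair (p r) (u + (\<Sum>s<k. int (a s - i s) *s e1 s)) \<noteq> 0"
      using a compatible_roots_pair_sum(1)[OF C r(1)] by (simp add: pair_add_right)
    then show "(\<Prod>r<k. of_nat (a r choose i r)) * y (u + (\<Sum>r<k. int (i r) *s e2 r))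
        * x (u + (\<Sum>r<k. int (a r - i r) *s e1 r)) = 0"
      using orbit_closure_vanishes[OF x r(1)] by simp
  qed simp_all
  also have "(\<Sum>r<k. int (a r) *s e1 r) = (\<Sum>r<k. pair (p r) u *s e1 r)"
    using a by (intro sum.cong) auto
  finally show ?thesis .
qed

lemma sum_smult_fun_upd:
  fixes k :: nat and f :: "nat \<Rightarrow> 'a::comm_ring_1" and e :: "nat \<Rightarrow> 'a^'n"
  assumes "r < k"
  shows "(\<Sum>s<k. (f(r := t)) s *s e s) = (\<Sum>s<k. f s *s e s) + (t - f r) *s e r"
proof -
  have "(\<Sum>s<k. (f(r := t)) s *s e s) = (\<Sum>s<k. f s *s e s + (if s = r then (t - f r) *s e s else 0))"
    by (intro sum.cong) (auto simp: vec_eq_iff algebra_simps)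
  then show ?thesis
    using assms by (simp add: sum.distrib)
qed

lemma index_set_exchange:
  assumes C: "compatible_roots R k p e1 e2" and P: "\<forall>r<k. p r \<in> R" and u: "u \<in> S_mon R"
    and x: "\<forall>(r, v) \<in> index_set R k p. x (v + e1 r) = x (v + e2 r)"
    and cd: "\<forall>r<k. 0 \<le> c r \<and> 0 \<le> d r \<and> c r + d r = pair (p r) u"
  shows "x (u + (\<Sum>r<k. c r *s e1 r) + (\<Sum>r<k. d r *s e2 r)) = x (u + (\<Sum>r<k. pair (p r) u *s e2 r))"
proof -
  obtain n where "n = (\<Sum>r<k. nat (c r))"
    by blast
  with cd show ?thesis
  proof (induction n arbitrary: c d)
    case 0
    then have "\<forall>r<k. c r = 0"
      by (auto intro!: order_antisym)
    with 0 have "(\<Sum>r<k. c r *s e1 r) = 0"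
      and "(\<Sum>r<k. d r *s e2 r) = (\<Sum>r<k. pair (p r) u *s e2 r)"
      by (auto intro!: sum.neutral sum.cong)
    then show ?case
      by simp
  next
    case (Suc n)
    then obtain r where r: "r < k" "0 < c r"
      by (metis lessThan_iff nat_le_0 not_le sum.neutral nat.distinct(1))
    define c' where "c' = c(r := c r - 1)"
    define d' where "d' = d(r := d r + 1)"
    define v where "v = u + (\<Sum>s<k. c' s *s e1 s) + (\<Sum>s<k. d s *s e2 s)"
    have "v \<in> S_mon R"
      unfolding v_def using Suc.prems(1) r by (intro root_shift_in_S_mon[OF C P u]) (auto simp: c'_def)
    moreover have "\<forall>j<k. pair (p j) v = (if j = r then 1 else 0)"
      using Suc.prems(1) compatible_roots_pair_sum[OF C] by (auto simp: v_def c'_def pair_add_right)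
    ultimately have "(r, v) \<in> index_set R k p"
      using r by (simp add: index_set_def)
    then have "x (v + e1 r) = x (v + e2 r)"
      using x by auto
    have e1_shift: "u + (\<Sum>s<k. c s *s e1 s) + (\<Sum>s<k. d s *s e2 s) = v + e1 r"
      using sum_smult_fun_upd[OF r(1), of c' "c r" e1] by (simp add: v_def c'_def)
    have e2_shift: "v + e2 r = u + (\<Sum>s<k. c' s *s e1 s) + (\<Sum>s<k. d' s *s e2 s)"
      using sum_smult_fun_upd[OF r(1), of d "d r + 1" e2] by (simp add: v_def d'_def)
    have cd': "\<forall>s<k. 0 \<le> c' s \<and> 0 \<le> d' s \<and> c' s + d' s = pair (p s) u"
      using Suc.prems(1) r by (auto simp: c'_def d'_def)
    have n: "n = (\<Sum>s<k. nat (c' s))"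
      using Suc.prems(2) r by (simp add: c'_def sum.remove[of "{..<k}" r] nat_diff_distrib)
    have "x (u + (\<Sum>s<k. c s *s e1 s) + (\<Sum>s<k. d s *s e2 s)) = x (v + e2 r)"
      unfolding e1_shift by fact
    also have "\<dots> = x (u + (\<Sum>r<k. pair (p r) u *s e2 r))"
      unfolding e2_shift by (rule Suc.IH[OF cd' n])
    finally show ?case .
  qed
qed

definition torus_one :: "(int^'n) set \<Rightarrow> (int^'n) \<Rightarrow> 'k::field" where
  "torus_one R = (\<lambda>u. if u \<in> S_mon R then 1 else 0)"

(* A point of O_tau; these points separate the characters in tau^perp. *)
definition orbit_point :: "(int^'n) set \<Rightarrow> nat \<Rightarrow> (nat \<Rightarrow> int^'n) \<Rightarrow> 'n \<Rightarrow> (int^'n) \<Rightarrow> 'k::field_char_0"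
  where "orbit_point R k p i =
    (\<lambda>u. if u \<in> S_mon R \<and> (\<forall>j<k. pair (p j) u = 0) then of_rat (2 powi (u $ i)) else 0)"

lemma torus_one_in_points: "torus_one R \<in> points R"
  by (simp add: torus_one_def points_def zero_in_S_mon add_in_S_mon)

lemma orbit_point_in_orbit_closure:
  assumes P: "\<forall>r<k. p r \<in> R"
  shows "orbit_point R k p i \<in> orbit_closure R k p"
proof -
  have "orbit_point R k p i (u + v) = orbit_point R k p i u * orbit_point R k p i v"
    if u: "u \<in> S_mon R" and v: "v \<in> S_mon R" for u v
  proof (cases "\<forall>j<k. pair (p j) u = 0 \<and> pair (p j) v = 0")
    case True
    then show ?thesis
      using u v add_in_S_mon[OF u v]
      by (simp add: orbit_point_def pair_add_right power_int_add of_rat_mult)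
  next
    case False
    then obtain j where "j < k" "pair (p j) u \<noteq> 0 \<or> pair (p j) v \<noteq> 0"
      by auto
    moreover have "0 \<le> pair (p j) u" "0 \<le> pair (p j) v"
      using u v P \<open>j < k\<close> S_mon_pair_nonneg by auto
    ultimately have "pair (p j) (u + v) \<noteq> 0"
      unfolding pair_add_right by linarith
    then show ?thesis
      using \<open>j < k\<close> False by (auto simp: orbit_point_def)
  qed
  moreover have "orbit_point R k p i 0 = 1"
    by (simp add: orbit_point_def zero_in_S_mon)
  moreover have "orbit_point R k p i u = 0" if "u \<notin> S_mon R \<or> (\<exists>j<k. pair (p j) u \<noteq> 0)" for u
    using that by (auto simp: orbit_point_def)
  ultimately show ?thesis
    by (auto simp: orbit_closure_def points_def)
qed

lemma power_int_inject:
  fixes a :: "'a::linordered_field"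
  assumes "1 < a"
  shows "a powi m = a powi n \<longleftrightarrow> m = n"
  using assms power_int_strict_increasing[of m n a] power_int_strict_increasing[of n m a]
  by (cases m n rule: linorder_cases) auto

lemma orbit_point_separates:
  assumes "v \<in> S_mon R" "w \<in> S_mon R" "\<forall>j<k. pair (p j) v = 0" "\<forall>j<k. pair (p j) w = 0"
    and "v $ i \<noteq> w $ i"
  shows "orbit_point R k p i v \<noteq> orbit_point R k p i w"
  using assms power_int_inject[of "2::rat" "v $ i" "w $ i"] by (simp add: orbit_point_def)

lemma center_subset_orbit_closure:
  assumes C: "compatible_roots R k p e1 e2" and P: "\<forall>r<k. p r \<in> R"
    and indep: "\<forall>c :: nat \<Rightarrow> int. (\<Sum>r<k. c r *s (e2 r - e1 r)) = 0 \<longrightarrow> (\<forall>r<k. c r = 0)"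
  shows "center R k p e1 e2 \<subseteq> (orbit_closure R k p :: ((int^'n) \<Rightarrow> 'k::field_char_0) set)"
proof
  fix x :: "(int^'n) \<Rightarrow> 'k" assume "x \<in> center R k p e1 e2"
  then have x: "x \<in> points R" and comm: "\<And>y. y \<in> points R \<Longrightarrow> rmult R k p e1 e2 x y = rmult R k p e1 e2 y x"
    by (auto simp: center_def)
  have "x u = 0" if u: "u \<in> S_mon R" and j: "j < k" "pair (p j) u \<noteq> 0" for u j
  proof -
    define v1 where "v1 = u + (\<Sum>r<k. pair (p r) u *s e1 r)"
    define v2 where "v2 = u + (\<Sum>r<k. pair (p r) u *s e2 r)"
    have "v2 - v1 = (\<Sum>r<k. pair (p r) u *s (e2 r - e1 r))"
      by (simp add: v1_def v2_def sum_subtractf vector_ssub_ldistrib)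
    moreover have "(\<Sum>r<k. pair (p r) u *s (e2 r - e1 r)) \<noteq> 0"
      using indep[rule_format, of "\<lambda>r. pair (p r) u"] j by auto
    ultimately obtain i where i: "v1 $ i \<noteq> v2 $ i"
      by (metis eq_iff_diff_eq_0 vec_eq_iff)
    define y :: "(int^'n) \<Rightarrow> 'k" where "y = orbit_point R k p i"
    have y: "y \<in> orbit_closure R k p"
      unfolding y_def using P by (rule orbit_point_in_orbit_closure)
    have pair_u: "\<forall>r<k. 0 \<le> pair (p r) u"
      using u P S_mon_pair_nonneg by blast
    have "v1 \<in> S_mon R" "v2 \<in> S_mon R"
      using root_shift_in_S_mon[OF C P u, of "\<lambda>r. pair (p r) u" "\<lambda>_. 0"]
        root_shift_in_S_mon[OF C P u, of "\<lambda>_. 0" "\<lambda>r. pair (p r) u"] pair_u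
      by (simp_all add: v1_def v2_def)
    moreover have "\<forall>j<k. pair (p j) v1 = 0" "\<forall>j<k. pair (p j) v2 = 0"
      using compatible_roots_pair_sum[OF C] by (simp_all add: v1_def v2_def pair_add_right)
    ultimately have "y v1 \<noteq> y v2"
      unfolding y_def using i by (rule orbit_point_separates)
    moreover have "x u * y v1 = y v2 * x u"
    proof -
      have "x u * y v1 = rmult R k p e1 e2 x y u"
        unfolding v1_def by (rule rmult_orbit_closure_right[OF C P u y, symmetric])
      also have "\<dots> = rmult R k p e1 e2 y x u"
        using comm y by (simp add: orbit_closure_def)
      also have "\<dots> = y v2 * x u"
        unfolding v2_def by (rule rmult_orbit_closure_left[OF C P u y])
      finally show ?thesis .
    qed
    ultimately show "x u = 0"
      by (simp add: mult.commute)
  qed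
  then show "x \<in> orbit_closure R k p"
    using x by (auto simp: orbit_closure_def)
qed

lemma center_exchange:
  assumes C: "compatible_roots R k p e1 e2" and P: "\<forall>r<k. p r \<in> R"
    and x: "x \<in> center R k p e1 e2" "x \<in> orbit_closure R k p"
    and ru: "(r, u) \<in> index_set R k p"
  shows "x (u + e1 r) = x (u + e2 r)"
proof -
  have r: "r < k" and u: "u \<in> S_mon R" and pair_u: "\<forall>j<k. pair (p j) u = (if j = r then 1 else 0)"
    using ru by (auto simp: index_set_def)
  have shift: "(\<Sum>s<k. pair (p s) u *s e s) = e r" for e :: "nat \<Rightarrow> int^'n"
  proof -
    have "(\<Sum>s<k. pair (p s) u *s e s) = (\<Sum>s<k. if s = r then e s else 0)"
      using pair_u by (intro sum.cong) auto
    then show ?thesis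
      using r by simp
  qed
  have "x (u + e2 r) = rmult R k p e1 e2 x (torus_one R) u"
    using rmult_orbit_closure_left[OF C P u x(2)] u by (simp add: shift torus_one_def)
  also have "\<dots> = rmult R k p e1 e2 (torus_one R) x u"
    using x(1) torus_one_in_points[of R] unfolding center_def by (blast dest: fun_cong)
  also have "\<dots> = x (u + e1 r)"
    using rmult_orbit_closure_right[OF C P u x(2)] u by (simp add: shift torus_one_def)
  finally show ?thesis ..
qed

lemma orbit_closure_exchange_in_center:
  assumes C: "compatible_roots R k p e1 e2" and P: "\<forall>r<k. p r \<in> R"
    and x: "x \<in> orbit_closure R k p"
    and exch: "\<forall>(r, u) \<in> index_set R k p. x (u + e1 r) = x (u + e2 r)"
  shows "x \<in> center R k p e1 e2"
proof -
  have "rmult R k p e1 e2 x y u = rmult R k p e1 e2 y x u" for y u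
  proof (cases "u \<in> S_mon R")
    case True
    have "\<forall>r<k. 0 \<le> pair (p r) u"
      using True P S_mon_pair_nonneg by blast
    then have "x (u + (\<Sum>r<k. pair (p r) u *s e1 r)) = x (u + (\<Sum>r<k. pair (p r) u *s e2 r))"
      using index_set_exchange[OF C P True exch, of "\<lambda>r. pair (p r) u" "\<lambda>_. 0"] by simp
    then show ?thesis
      using rmult_orbit_closure_left[OF C P True x] rmult_orbit_closure_right[OF C P True x]
      by simp
  qed (simp add: rmult_def)
  then show ?thesis
    using x by (auto simp: center_def orbit_closure_def)
qed

theorem mainTheorem12:
  fixes R :: "(int^'n::finite) set" and k :: nat and p e1 e2 :: "nat \<Rightarrow> int^'n"
  assumes "alg_closed TYPE('k::field_char_0)"
    and "ray_generators R"
    and "regular_face R k p"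
    and "compatible_roots R k p e1 e2"
    and "\<forall>c :: nat \<Rightarrow> int. (\<Sum>r<k. c r *s (e2 r - e1 r)) = 0 \<longrightarrow> (\<forall>r<k. c r = 0)"
  shows "(center R k p e1 e2 :: ((int^'n) \<Rightarrow> 'k) set)
    = orbit_closure R k p \<inter>
      {x \<in> points R. \<forall>(r, u) \<in> index_set R k p. x (u + e1 r) = x (u + e2 r)}"
proof -
  have P: "\<forall>r<k. p r \<in> R"
    using assms(3) by (simp add: regular_face_def)
  show ?thesis
  proof (intro equalityI subsetI)
    fix x :: "(int^'n) \<Rightarrow> 'k" assume x: "x \<in> center R k p e1 e2"
    then have "x \<in> orbit_closure R k p"
      using center_subset_orbit_closure[OF assms(4) P assms(5)] by blast
    with x show "x \<in> orbit_closure R k p \<inter>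
        {x \<in> points R. \<forall>(r, u) \<in> index_set R k p. x (u + e1 r) = x (u + e2 r)}"
      using center_exchange[OF assms(4) P x] by (auto simp: center_def)
  qed (use orbit_closure_exchange_in_center[OF assms(4) P] in blast)
qed

end
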